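(* Let $n'\in\mathbb{N}$, $g\in\mathbb{N}$, and let $\phi:\mathbb{N}\to\mathbb{N}^{n'}$ be a monotonic map. Then $\phi$ changes the Stanley depth by $1-n'$ with respect to $g$ and $g':=\phi(g)$.
   Context: $\mathbb{N}^n$ carries the componentwise partial order; $[a,b]=\{c: a\le c\le b\}$; a map is monotonic if it preserves this order. A monotonic map $\phi:\mathbb{N}^n\to\mathbb{N}^{n'}$ changes the Stanley depth by $\ell\in\mathbb{Z}$ with respect to $g\in\mathbb{N}^n$ and $g'\in\mathbb{N}^{n'}$ if (1) $\phi(g)\le g'$, and (2) for every interval $[a',b']\subset[0,g']$, the set $\phi^{-1}([a',b'])\cap[0,g]$ is a finite disjoint union $\bigcup_i[a^i,b^i]$ of intervals with $\#\{j\in[n]: b^i_j=g_j\}\ge\#\{j\in[n']: b'_j=g'_j\}+\ell$ for all $i$. *)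

theory Defs
  imports Main
begin

text \<open>Elements of N^n are represented as lists of naturals of length n.
  The componentwise order: \<open>vle a b\<close> holds iff a and b have the same length
  and a_j \<le> b_j for every j.\<close>

definition vle :: "nat list \<Rightarrow> nat list \<Rightarrow> bool" where
  "vle a b \<longleftrightarrow> list_all2 (\<le>) a b"

definition vinterval :: "nat list \<Rightarrow> nat list \<Rightarrow> nat list set" where
  "vinterval a b = {c. vle a c \<and> vle c b}"

definition mono_vmap :: "nat \<Rightarrow> nat \<Rightarrow> (nat list \<Rightarrow> nat list) \<Rightarrow> bool" where
  "mono_vmap n n' \<phi> \<longleftrightarrow>
     (\<forall>a. length a = n \<longrightarrow> length (\<phi> a) = n') \<and>
     (\<forall>a b. length a = n \<longrightarrow> vle a b \<longrightarrow> vle (\<phi> a) (\<phi> b))"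

definition nmax :: "nat list \<Rightarrow> nat list \<Rightarrow> nat" where
  "nmax b g = card {j. j < length g \<and> b ! j = g ! j}"

definition changes_sdepth ::
  "nat \<Rightarrow> nat \<Rightarrow> (nat list \<Rightarrow> nat list) \<Rightarrow> int \<Rightarrow> nat list \<Rightarrow> nat list \<Rightarrow> bool" where
  "changes_sdepth n n' \<phi> l g g' \<longleftrightarrow>
     length g = n \<and> length g' = n' \<and>
     vle (\<phi> g) g' \<and>
     (\<forall>a' b'. vinterval a' b' \<subseteq> vinterval (replicate n' 0) g' \<longrightarrow>
        (\<exists>P :: (nat list \<times> nat list) set.
           finite P \<and>
           (\<forall>p\<in>P. \<forall>q\<in>P. p \<noteq> q \<longrightarrow>
              vinterval (fst p) (snd p) \<inter> vinterval (fst q) (snd q) = {}) \<and>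
           (\<Union>p\<in>P. vinterval (fst p) (snd p)) =
              {c. \<phi> c \<in> vinterval a' b'} \<inter> vinterval (replicate n 0) g \<and>
           (\<forall>p\<in>P. int (nmax (snd p) g) \<ge> int (nmax b' g') + l)))"

end

theory Submission
  imports Defs
begin

text \<open>A monotonic map on the chain \<open>\<nat>\<close> pulls intervals back to order-convex sets, so the preimage
  of any interval inside \<open>[0, g]\<close> is empty or a single interval \<open>[lo, hi]\<close>. The loss
  \<open>nmax b' \<phi>(g) - nmax [hi] [g]\<close> is at most \<open>n' - 1\<close> unless \<open>b' = \<phi>(g)\<close>; but then \<open>g\<close> itself
  lies in the preimage, so \<open>hi = g\<close> and the loss is exactly \<open>n' - 1\<close>.\<close>

lemma vle_refl [simp]: "vle a a"
  unfolding vle_def by (simp add: list_all2_refl)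

lemma vle_trans: "vle a b \<Longrightarrow> vle b c \<Longrightarrow> vle a c"
  unfolding vle_def by (rule list_all2_trans) auto

lemma vle_length: "vle a b \<Longrightarrow> length a = length b"
  unfolding vle_def by (rule list_all2_lengthD)

lemma vle_singleton [simp]: "vle [x] [y] \<longleftrightarrow> x \<le> y"
  unfolding vle_def by simp

lemma vinterval_singleton: "vinterval [a] [b] = (\<lambda>x. [x]) ` {a..b}"
  unfolding vinterval_def vle_def by (auto simp: list_all2_Cons1 list_all2_Cons2)

lemma nmax_self: "nmax g g = length g"
  unfolding nmax_def by simp

lemma nmax_less_length:
  assumes "length b = length g" and "b \<noteq> g"
  shows "nmax b g < length g"
proof -
  let ?E = "{j. j < length g \<and> b ! j = g ! j}"
  have sub: "?E \<subseteq> {..<length g}" by auto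
  have "\<not> (\<forall>j < length g. b ! j = g ! j)" using assms by (auto simp: list_eq_iff_nth_eq)
  then obtain j where "j < length g" and "b ! j \<noteq> g ! j" by blast
  with sub have "?E \<subset> {..<length g}" by blast
  then have "card ?E < card {..<length g}" by (intro psubset_card_mono) simp_all
  then show ?thesis unfolding nmax_def by simp
qed

lemma mono_vmap_singleton:
  assumes "mono_vmap 1 n' (\<lambda>c. \<phi> (hd c))"
  shows mono_vmap_singleton_length: "length (\<phi> x) = n'"
    and mono_vmap_singleton_monotone: "monotone (\<le>) vle \<phi>"
proof -
  note vmap = assms[unfolded mono_vmap_def, THEN conjunct1, rule_format, of "[x]"]
    and vmono = assms[unfolded mono_vmap_def, THEN conjunct2, rule_format]
  show "length (\<phi> x) = n'" using vmap by simp
  show "monotone (\<le>) vle \<phi>" by (rule monotoneI) (use vmono[of "[_]" "[_]"] in simp)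
qed

lemma monotone_preimage_vinterval_convex:
  fixes \<phi> :: "'a::order \<Rightarrow> nat list"
  assumes "monotone (\<le>) vle \<phi>" and "\<phi> x \<in> vinterval a b" and "\<phi> z \<in> vinterval a b"
    and "x \<le> y" and "y \<le> z"
  shows "\<phi> y \<in> vinterval a b"
proof -
  have "vle (\<phi> x) (\<phi> y)" and "vle (\<phi> y) (\<phi> z)"
    using monotoneD[OF assms(1)] assms(4,5) by blast+
  then show ?thesis
    using assms(2,3) vle_trans[of a "\<phi> x" "\<phi> y"] vle_trans[of "\<phi> y" "\<phi> z" b]
    unfolding vinterval_def by simp
qed

lemma convex_finite_set_eq_atLeastAtMost:
  fixes S :: "'a::linorder set"
  assumes "finite S" and "S \<noteq> {}"
    and between: "\<And>x y z. x \<in> S \<Longrightarrow> z \<in> S \<Longrightarrow> x \<le> y \<Longrightarrow> y \<le> z \<Longrightarrow> y \<in> S"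
  shows "S = {Min S..Max S}"
proof
  show "S \<subseteq> {Min S..Max S}" using assms(1) by auto
  have "Min S \<in> S" and "Max S \<in> S" using assms(1,2) by simp_all
  show "{Min S..Max S} \<subseteq> S"
  proof
    fix y
    assume "y \<in> {Min S..Max S}"
    then show "y \<in> S" using between[OF \<open>Min S \<in> S\<close> \<open>Max S \<in> S\<close>] by simp
  qed
qed

lemma monotone_preimage_vinterval_atLeastAtMost:
  fixes \<phi> :: "nat \<Rightarrow> nat list" and g :: nat and a b :: "nat list"
  defines "S \<equiv> {x. x \<le> g \<and> \<phi> x \<in> vinterval a b}"
  assumes "monotone (\<le>) vle \<phi>" and "S \<noteq> {}"
  shows "S = {Min S..Max S}"
proof (rule convex_finite_set_eq_atLeastAtMost)
  show "finite S" unfolding S_def by simp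
  show "S \<noteq> {}" by fact
  fix x y z
  assume "x \<in> S" "z \<in> S" "x \<le> y" "y \<le> z"
  moreover from this have "\<phi> y \<in> vinterval a b"
    using monotone_preimage_vinterval_convex[OF assms(2)] unfolding S_def by blast
  ultimately show "y \<in> S" unfolding S_def by simp
qed

lemma monotone_preimage_vinterval_Max:
  fixes \<phi> :: "nat \<Rightarrow> nat list" and g :: nat and a :: "nat list"
  defines "S \<equiv> {x. x \<le> g \<and> \<phi> x \<in> vinterval a (\<phi> g)}"
  assumes "monotone (\<le>) vle \<phi>" and "x \<in> S"
  shows "Max S = g"
proof (rule Max_eqI)
  show "finite S" unfolding S_def by simp
  show "y \<le> g" if "y \<in> S" for y using that unfolding S_def by simp
  have "vle a (\<phi> x)" and "x \<le> g" using assms(3) unfolding S_def vinterval_def by simp_all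
  then have "vle a (\<phi> g)" using vle_trans monotoneD[OF assms(2)] by metis
  then show "g \<in> S" unfolding S_def vinterval_def by simp
qed

lemma monotone_preimage_vinterval_nmax_bound:
  fixes \<phi> :: "nat \<Rightarrow> nat list" and g :: nat and a b :: "nat list"
  defines "S \<equiv> {x. x \<le> g \<and> \<phi> x \<in> vinterval a b}"
  assumes "monotone (\<le>) vle \<phi>" and len: "\<And>x. length (\<phi> x) = n'" and "x \<in> S"
  shows "int (nmax b (\<phi> g)) + (1 - int n') \<le> int (nmax [Max S] [g])"
proof (cases "b = \<phi> g")
  case True
  then have "Max S = g" using monotone_preimage_vinterval_Max[OF assms(2)] assms(4) S_def by blast
  with True show ?thesis by (simp add: nmax_self len)
next
  case False
  have "vle (\<phi> x) b" using assms(4) unfolding S_def vinterval_def by simp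
  then have "length b = length (\<phi> g)" using vle_length len by metis
  with False have "nmax b (\<phi> g) < n'" using nmax_less_length len by metis
  then show ?thesis by simp
qed

lemma monotone_preimage_vinterval_partition:
  fixes \<phi> :: "nat \<Rightarrow> nat list" and g :: nat and a b :: "nat list"
  assumes mono: "monotone (\<le>) vle \<phi>" and len: "\<And>x. length (\<phi> x) = n'"
  shows "\<exists>P. finite P \<and>
           (\<forall>p\<in>P. \<forall>q\<in>P. p \<noteq> q \<longrightarrow>
              vinterval (fst p) (snd p) \<inter> vinterval (fst q) (snd q) = {}) \<and>
           (\<Union>p\<in>P. vinterval (fst p) (snd p)) =
              {c. \<phi> (hd c) \<in> vinterval a b} \<inter> vinterval [0] [g] \<and>
           (\<forall>p\<in>P. int (nmax b (\<phi> g)) + (1 - int n') \<le> int (nmax (snd p) [g]))"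
proof -
  define S where "S = {x. x \<le> g \<and> \<phi> x \<in> vinterval a b}"
  have preimage: "{c. \<phi> (hd c) \<in> vinterval a b} \<inter> vinterval [0] [g] = (\<lambda>x. [x]) ` S"
    by (auto simp: S_def vinterval_singleton)
  show ?thesis
  proof (cases "S = {}")
    case True
    then show ?thesis by (intro exI[of _ "{}"]) (simp add: preimage)
  next
    case False
    then obtain x where "x \<in> S" by blast
    have "vinterval [Min S] [Max S] = (\<lambda>x. [x]) ` S"
      using monotone_preimage_vinterval_atLeastAtMost[OF mono False[unfolded S_def]]
      by (simp add: vinterval_singleton S_def)
    moreover have "int (nmax b (\<phi> g)) + (1 - int n') \<le> int (nmax [Max S] [g])"
      using monotone_preimage_vinterval_nmax_bound[OF mono len] \<open>x \<in> S\<close> by (simp add: S_def)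
    ultimately show ?thesis
      by (intro exI[of _ "{([Min S], [Max S])}"]) (simp add: preimage)
  qed
qed

theorem lemma3p6:
  fixes n' g :: nat and \<phi> :: "nat \<Rightarrow> nat list"
  assumes "mono_vmap 1 n' (\<lambda>c. \<phi> (hd c))"
  shows "changes_sdepth 1 n' (\<lambda>c. \<phi> (hd c)) (1 - int n') [g] (\<phi> g)"
  using monotone_preimage_vinterval_partition[OF mono_vmap_singleton_monotone[OF assms]
      mono_vmap_singleton_length[OF assms]]
    mono_vmap_singleton_length[OF assms]
  unfolding changes_sdepth_def by simp

end
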